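(* The matroid $V_{10}/5\setminus 7$ has the half-plane property; equivalently, the polynomial $\frac{\partial f_{10}}{\partial x_5}\big|_{x_7=0}$ is stable.
   Context: $V_{10}$ is the matroid on $\{1,\dots,10\}$ whose bases are all $4$-element subsets of $\{1,\dots,10\}$ except $\{1,2,3,4\},\{1,2,5,6\},\{1,2,7,8\},\{1,2,9,10\},\{3,4,5,6\},\{5,6,7,8\},\{7,8,9,10\}$, and $f_{10}=\sum_{B}\prod_{i\in B}x_i$ (sum over bases $B$ of $V_{10}$) is its basis generating polynomial. For a matroid $M$ and element $e$, the deletion $M\setminus e$ has as bases the bases of $M$ not containing $e$ (basis generating polynomial: set $x_e=0$), and the contraction $M/e$ has as bases the sets $B\setminus\{e\}$ for bases $B$ of $M$ containing $e$ (basis generating polynomial: $\partial/\partial x_e$). $V_{10}/5\setminus 7$ means $(V_{10}/5)\setminus 7$. A homogeneous real polynomial $f$ is stable if for all vectors $v$ with all entries positive and all real vectors $w$, $f(tv+w)\in\mathbb{R}[t]$ has only real roots; a matroid has the half-plane property if its basis generating polynomial is stable. *)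

theory Defs
  imports Complex_Main
begin

definition V10_bases :: "nat set set" where
  "V10_bases = {B. B \<subseteq> {1..10} \<and> card B = 4}
     - {{1,2,3,4}, {1,2,5,6}, {1,2,7,8}, {1,2,9,10}, {3,4,5,6}, {5,6,7,8}, {7,8,9,10}}"

definition deletion_bases :: "nat set set \<Rightarrow> nat \<Rightarrow> nat set set" where
  "deletion_bases Bs e = {B \<in> Bs. e \<notin> B}"

definition contraction_bases :: "nat set set \<Rightarrow> nat \<Rightarrow> nat set set" where
  "contraction_bases Bs e = (\<lambda>B. B - {e}) ` {B \<in> Bs. e \<in> B}"

definition basis_gen_poly :: "nat set set \<Rightarrow> (nat \<Rightarrow> 'a::comm_ring_1) \<Rightarrow> 'a" where
  "basis_gen_poly Bs x = (\<Sum>B\<in>Bs. \<Prod>i\<in>B. x i)"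

definition stable :: "nat set \<Rightarrow> ((nat \<Rightarrow> complex) \<Rightarrow> complex) \<Rightarrow> bool" where
  "stable E f \<longleftrightarrow>
     (\<forall>v w :: nat \<Rightarrow> real. (\<forall>i\<in>E. v i > 0) \<longrightarrow>
        (\<forall>t::complex. f (\<lambda>i. t * complex_of_real (v i) + complex_of_real (w i)) = 0
                       \<longrightarrow> t \<in> \<real>))"

definition half_plane_property :: "nat set \<Rightarrow> nat set set \<Rightarrow> bool" where
  "half_plane_property E Bs \<longleftrightarrow> stable E (basis_gen_poly Bs)"

end

theory Submission
  imports Defs "HOL-Computational_Algebra.Fundamental_Theorem_Algebra"
begin

text \<open>Write f for the basis generating polynomial of the minor: the elementary symmetric
  polynomial of degree 3 in the eight remaining variables, minus the two monomials of the
  circuit-hyperplanes {1,2,6} and {3,4,6}. It suffices to show that f does not vanish when all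
  variables lie in the open upper half-plane; roots with Im t < 0 are then excluded by
  homogeneity. For such variables, 4 f is the coefficient of s^3 in an explicit sextic W(s)
  which factors as a product of linear terms s + w (Im w > 0) and a term
  s + 4 y + \<Sigma> (p + q - (p - q)^2 / (s + p + q)), each summand of which has nonnegative
  imaginary part for Im s \<ge> 0. So W has no roots in the closed upper half-plane, hence by
  Gauss-Lucas neither has its third derivative, whose value at 0 is 24 f.\<close>

abbreviation no_roots_upper :: "complex poly \<Rightarrow> bool" where
  "no_roots_upper p \<equiv> \<forall>s. Im s \<ge> 0 \<longrightarrow> poly p s \<noteq> 0"

lemma Im_inverse_neg: "Im (w :: complex) > 0 \<Longrightarrow> Im (inverse w) < 0"
  by (simp add: divide_neg_pos add_nonneg_pos)

text \<open>p'/p is the sum of 1/(s - r) over the roots r of p, which all lie in the open lower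
  half-plane.\<close>

lemma Im_log_deriv_neg:
  fixes p :: "complex poly"
  assumes "no_roots_upper p" "degree p \<ge> 1" "Im s \<ge> 0"
  shows "Im (poly (pderiv p) s / poly p s) < 0"
  using assms
proof (induction "degree p" arbitrary: p rule: nat_less_induct)
  case 1
  then obtain r where r: "poly p r = 0"
    using fundamental_theorem_of_algebra constant_degree by (metis not_one_le_zero)
  with "1.prems"(1) have "Im r < 0" by (meson not_le)
  obtain q where q: "p = [:- r, 1:] * q"
    using r poly_eq_0_iff_dvd by (metis dvdE)
  have "q \<noteq> 0" using q "1.prems"(2) by auto
  then have deg_q: "degree q = degree p - 1"
    unfolding q by (subst degree_mult_eq) auto
  have q_roots: "no_roots_upper q" using "1.prems"(1) q by auto
  have "s - r \<noteq> 0" "poly q s \<noteq> 0" using \<open>Im r < 0\<close> "1.prems"(3) q_roots by auto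
  have deriv: "pderiv p = q + [:- r, 1:] * pderiv q"
    unfolding q pderiv_mult by (simp add: pderiv_pCons)
  have pd: "poly (pderiv p) s = poly q s + (s - r) * poly (pderiv q) s"
    unfolding deriv by (simp add: algebra_simps)
  have pp: "poly p s = (s - r) * poly q s"
    by (simp add: q algebra_simps)
  have split: "poly (pderiv p) s / poly p s = inverse (s - r) + poly (pderiv q) s / poly q s"
    unfolding pd pp using \<open>s - r \<noteq> 0\<close> \<open>poly q s \<noteq> 0\<close> by (simp add: field_simps)
  have "Im (poly (pderiv q) s / poly q s) \<le> 0"
  proof (cases "degree q = 0")
    case True
    then have "pderiv q = 0" by (simp add: pderiv_eq_0_iff)
    then show ?thesis by simp
  next
    case False
    have "degree q < degree p" using deg_q "1.prems"(2) by simp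
    then show ?thesis
      using "1.hyps" q_roots False "1.prems"(3) by (simp add: less_imp_le)
  qed
  moreover have "Im (inverse (s - r)) < 0"
    using \<open>Im r < 0\<close> "1.prems"(3) by (intro Im_inverse_neg) simp
  ultimately show ?case by (simp add: split)
qed

lemma no_roots_upper_pderiv:
  assumes "no_roots_upper p" "degree p \<ge> 1"
  shows "no_roots_upper (pderiv p)"
  using Im_log_deriv_neg[OF assms] by fastforce

lemma no_roots_upper_higher_pderiv:
  assumes "no_roots_upper p" "k \<le> degree p"
  shows "no_roots_upper ((pderiv ^^ k) p)"
  using assms(2)
proof (induction k)
  case (Suc k)
  then show ?case
    using no_roots_upper_pderiv[of "(pderiv ^^ k) p"] by (simp add: degree_higher_pderiv)
qed (use assms(1) in simp)

lemma no_roots_upper_coeff_nonzero: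
  assumes "no_roots_upper p" "k \<le> degree p"
  shows "coeff p k \<noteq> 0"
proof -
  have "poly ((pderiv ^^ k) p) 0 = fact k * coeff p k"
    by (simp add: poly_0_coeff_0 coeff_higher_pderiv pochhammer_fact)
  then show ?thesis
    using no_roots_upper_higher_pderiv[OF assms] by force
qed

fun elem_sym :: "'a::comm_ring_1 list \<Rightarrow> nat \<Rightarrow> 'a" where
  "elem_sym xs 0 = 1"
| "elem_sym [] (Suc k) = 0"
| "elem_sym (x # xs) (Suc k) = x * elem_sym xs k + elem_sym xs (Suc k)"

lemma elem_sym_scale: "elem_sym (map ((*) c) xs) k = c ^ k * elem_sym xs k"
  by (induction xs k rule: elem_sym.induct) (simp_all add: algebra_simps)

lemma card_subsets_insert:
  assumes "finite A" "a \<notin> A"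
  shows "{S. S \<subseteq> insert a A \<and> card S = Suc k}
       = insert a ` {S. S \<subseteq> A \<and> card S = k} \<union> {S. S \<subseteq> A \<and> card S = Suc k}"
proof (intro equalityI subsetI)
  fix S assume S: "S \<in> {S. S \<subseteq> insert a A \<and> card S = Suc k}"
  then have "finite S" using assms(1) finite_subset by auto
  with S show "S \<in> insert a ` {S. S \<subseteq> A \<and> card S = k} \<union> {S. S \<subseteq> A \<and> card S = Suc k}"
    by (cases "a \<in> S") (auto intro!: image_eqI[of S "insert a" "S - {a}"])
next
  fix S assume "S \<in> insert a ` {S. S \<subseteq> A \<and> card S = k} \<union> {S. S \<subseteq> A \<and> card S = Suc k}"
  with assms show "S \<in> {S. S \<subseteq> insert a A \<and> card S = Suc k}"
    by (auto simp: card_insert_if finite_subset)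
qed

lemma sum_card_subsets_prod_eq_elem_sym:
  assumes "distinct is"
  shows "(\<Sum>S | S \<subseteq> set is \<and> card S = k. \<Prod>i\<in>S. x i) = elem_sym (map x is) k"
  using assms
proof (induction "is" arbitrary: k)
  case Nil
  have empty: "{S. S \<subseteq> set [] \<and> card S = k} = (if k = 0 then {{}} else {})" by auto
  show ?case by (subst empty) (cases k, simp_all)
next
  case (Cons i "is")
  show ?case
  proof (cases k)
    case 0
    have empty: "{S. S \<subseteq> set (i # is) \<and> card S = 0} = {{}}"
      by (auto simp: card_eq_0_iff finite_subset)
    show ?thesis unfolding 0 by (subst empty) simp
  next
    case (Suc k)
    let ?subsets = "\<lambda>k. {S. S \<subseteq> set is \<and> card S = k}"
    have "i \<notin> set is" using Cons.prems by simp
    then have inj: "inj_on (insert i) (?subsets k)"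
      by (auto simp: inj_on_def)
    have disj: "insert i ` ?subsets k \<inter> ?subsets (Suc k) = {}"
      using \<open>i \<notin> set is\<close> by auto
    have "(\<Sum>S\<in>insert i ` ?subsets k. \<Prod>j\<in>S. x j) = (\<Sum>S\<in>?subsets k. x i * (\<Prod>j\<in>S. x j))"
      unfolding sum.reindex[OF inj] o_def
      using \<open>i \<notin> set is\<close> by (intro sum.cong refl) (auto intro: prod.insert finite_subset)
    then have "(\<Sum>S | S \<subseteq> set (i # is) \<and> card S = Suc k. \<Prod>j\<in>S. x j)
        = x i * (\<Sum>S\<in>?subsets k. \<Prod>j\<in>S. x j) + (\<Sum>S\<in>?subsets (Suc k). \<Prod>j\<in>S. x j)"
      using \<open>i \<notin> set is\<close> disj
      by (simp add: card_subsets_insert sum.union_disjoint sum_distrib_left)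
    then show ?thesis
      using Cons by (simp add: Suc)
  qed
qed

lemma deletion_contraction_bases_uniform_minus:
  assumes "finite G" "e \<in> G" "f \<noteq> e"
  shows "deletion_bases (contraction_bases ({B. B \<subseteq> G \<and> card B = Suc k} - X) e) f
       = {S. S \<subseteq> G - {e, f} \<and> card S = k} - (\<lambda>B. B - {e}) ` {B \<in> X. e \<in> B \<and> f \<notin> B}"
proof (intro equalityI subsetI)
  fix S assume "S \<in> deletion_bases (contraction_bases ({B. B \<subseteq> G \<and> card B = Suc k} - X) e) f"
  then obtain B where B: "B \<subseteq> G" "card B = Suc k" "B \<notin> X" "e \<in> B" "f \<notin> B" "S = B - {e}"
    unfolding deletion_bases_def contraction_bases_def using assms(3) by auto
  have "B = insert e S" using B by auto
  then have "S \<notin> (\<lambda>B. B - {e}) ` {B \<in> X. e \<in> B \<and> f \<notin> B}"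
    using B(3) by (auto simp: insert_absorb)
  moreover have "card S = k" using B by (simp add: card_gt_0_iff)
  ultimately show "S \<in> {S. S \<subseteq> G - {e, f} \<and> card S = k} - (\<lambda>B. B - {e}) ` {B \<in> X. e \<in> B \<and> f \<notin> B}"
    using B by auto
next
  fix S assume S: "S \<in> {S. S \<subseteq> G - {e, f} \<and> card S = k} - (\<lambda>B. B - {e}) ` {B \<in> X. e \<in> B \<and> f \<notin> B}"
  then have "finite S" "e \<notin> S" "f \<notin> S"
    using assms(1) finite_subset by auto
  have "insert e S \<notin> X"
  proof
    assume "insert e S \<in> X"
    then have "S \<in> (\<lambda>B. B - {e}) ` {B \<in> X. e \<in> B \<and> f \<notin> B}"
      using \<open>e \<notin> S\<close> \<open>f \<notin> S\<close> assms(3) by (intro image_eqI[where x = "insert e S"]) auto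
    with S show False by blast
  qed
  moreover have "insert e S \<subseteq> G" "card (insert e S) = Suc k"
    using S assms(2) \<open>finite S\<close> \<open>e \<notin> S\<close> by auto
  moreover have "S = insert e S - {e}"
    using \<open>e \<notin> S\<close> by simp
  ultimately show "S \<in> deletion_bases (contraction_bases ({B. B \<subseteq> G \<and> card B = Suc k} - X) e) f"
    unfolding deletion_bases_def contraction_bases_def using \<open>f \<notin> S\<close> by blast
qed

text \<open>The arguments correspond to the elements 1, 2, 3, 4, 6, 8, 9, 10.\<close>

definition f_minor :: "'a::comm_ring_1 \<Rightarrow> 'a \<Rightarrow> 'a \<Rightarrow> 'a \<Rightarrow> 'a \<Rightarrow> 'a \<Rightarrow> 'a \<Rightarrow> 'a \<Rightarrow> 'a" where
  "f_minor a b c d y z1 z2 z3 = elem_sym [a, b, c, d, y, z1, z2, z3] 3 - y * (a * b + c * d)"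

lemma V10_minor_bases:
  "deletion_bases (contraction_bases V10_bases 5) 7
     = {S. S \<subseteq> set [1, 2, 3, 4, 6, 8, 9, 10] \<and> card S = 3} - {{1, 2, 6}, {3, 4, 6}}"
proof -
  have "{1..10} - {5, 7} = set [1, 2, 3, 4, 6, 8, 9, 10 :: nat]"
    by auto presburger
  moreover have "{B \<in> {{1, 2, 3, 4}, {1, 2, 5, 6}, {1, 2, 7, 8}, {1, 2, 9, 10},
        {3, 4, 5, 6}, {5, 6, 7, 8}, {7, 8, 9, 10 :: nat}}. 5 \<in> B \<and> 7 \<notin> B} = {{1, 2, 5, 6}, {3, 4, 5, 6}}"
    unfolding Collect_conj_eq Collect_mem_eq Int_insert_left by simp
  ultimately show ?thesis
    unfolding V10_bases_def
    using deletion_contraction_bases_uniform_minus[of "{1..10}" 5 7 3] by (simp add: insert_Diff_if)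
qed

lemma basis_gen_poly_V10_minor:
  fixes x :: "nat \<Rightarrow> 'a::comm_ring_1"
  shows "basis_gen_poly (deletion_bases (contraction_bases V10_bases 5) 7) x
     = f_minor (x 1) (x 2) (x 3) (x 4) (x 6) (x 8) (x 9) (x 10)"
proof -
  let ?subsets = "{S. S \<subseteq> set [1, 2, 3, 4, 6, 8, 9, 10 :: nat] \<and> card S = 3}"
  have "{{1, 2, 6}, {3, 4, 6}} \<subseteq> ?subsets" by auto
  moreover have "{1, 2, 6} \<noteq> {3, 4, 6 :: nat}" by (simp add: set_eq_iff exI[of _ 1])
  ultimately have "basis_gen_poly (deletion_bases (contraction_bases V10_bases 5) 7) x
      = (\<Sum>S\<in>?subsets. \<Prod>i\<in>S. x i) - (x 1 * x 2 * x 6 + x 3 * x 4 * x 6)"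
    unfolding basis_gen_poly_def V10_minor_bases by (simp add: sum_diff mult.assoc)
  moreover have "(\<Sum>S\<in>?subsets. \<Prod>i\<in>S. x i) = elem_sym (map x [1, 2, 3, 4, 6, 8, 9, 10]) 3"
    by (rule sum_card_subsets_prod_eq_elem_sym) simp
  ultimately show ?thesis
    by (simp add: f_minor_def algebra_simps)
qed

definition pair_term :: "complex \<Rightarrow> complex \<Rightarrow> complex \<Rightarrow> complex" where
  "pair_term p q s = p + q - (p - q)\<^sup>2 / (s + p + q)"

lemma pair_term_eq:
  assumes "s + p + q \<noteq> 0"
  shows "(p - q)\<^sup>2 = (p + q - pair_term p q s) * (s + p + q)"
  using assms by (simp add: pair_term_def)

text \<open>With u = -(p - q)/(s + p + q), the term equals p |1 + u|^2 + q |1 - u|^2 + s |u|^2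
  up to a summand that vanishes.\<close>

lemma Im_pair_term_nonneg:
  assumes "Im p \<ge> 0" "Im q \<ge> 0" "Im s \<ge> 0" "s + p + q \<noteq> 0"
  shows "Im (pair_term p q s) \<ge> 0"
proof -
  define u where "u = - (p - q) / (s + p + q)"
  have "pair_term p q s = p + q + (p - q) * u"
    using assms(4) by (simp add: pair_term_def u_def power2_eq_square field_simps)
  also have "\<dots> = p * ((1 + u) * cnj (1 + u)) + q * ((1 - u) * cnj (1 - u)) + s * (u * cnj u)
      - ((p - q) + u * (s + p + q)) * cnj u"
    by (simp add: algebra_simps)
  also have "(p - q) + u * (s + p + q) = 0"
    using assms(4) by (simp add: u_def)
  finally have "Im (pair_term p q s) = Im p * (cmod (1 + u))\<^sup>2 + Im q * (cmod (1 - u))\<^sup>2 + Im s * (cmod u)\<^sup>2"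
    unfolding complex_norm_square[symmetric] by simp
  with assms(1-3) show ?thesis by simp
qed

text \<open>A sextic in s whose s^3-coefficient is 4 f_minor, built so that it visibly has no
  roots in the closed upper half-plane (see the factorisation below).\<close>

definition witness_poly ::
    "complex \<Rightarrow> complex \<Rightarrow> complex \<Rightarrow> complex \<Rightarrow> complex \<Rightarrow> complex \<Rightarrow> complex \<Rightarrow> complex \<Rightarrow> complex poly"
  where
  "witness_poly a b c d y z1 z2 z3 =
     [:a + b + c + d + 4 * y + z1 + z2 + z3, 1:] * [:a + b, 1:] * [:c + d, 1:] * [:z1, 1:] * [:z2, 1:] * [:z3, 1:]
     - smult ((a - b)\<^sup>2) ([:c + d, 1:] * [:z1, 1:] * [:z2, 1:] * [:z3, 1:])
     - smult ((c - d)\<^sup>2) ([:a + b, 1:] * [:z1, 1:] * [:z2, 1:] * [:z3, 1:])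
     - smult (z1\<^sup>2) ([:a + b, 1:] * [:c + d, 1:] * [:z2, 1:] * [:z3, 1:])
     - smult (z2\<^sup>2) ([:a + b, 1:] * [:c + d, 1:] * [:z1, 1:] * [:z3, 1:])
     - smult (z3\<^sup>2) ([:a + b, 1:] * [:c + d, 1:] * [:z1, 1:] * [:z2, 1:])"

lemma poly_witness_poly:
  assumes "s + a + b \<noteq> 0" "s + c + d \<noteq> 0" "s + z1 \<noteq> 0" "s + z2 \<noteq> 0" "s + z3 \<noteq> 0"
  shows "poly (witness_poly a b c d y z1 z2 z3) s
    = (s + a + b) * (s + c + d) * (s + z1) * (s + z2) * (s + z3)
      * (s + 4 * y + pair_term a b s + pair_term c d s + pair_term z1 0 s + pair_term z2 0 s + pair_term z3 0 s)"
proof -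
  define X1 X2 X3 X4 X5 where X_defs:
    "X1 = s + (a + b)" "X2 = s + (c + d)" "X3 = s + z1" "X4 = s + z2" "X5 = s + z3"
  define P1 P2 P3 P4 P5 where P_defs:
    "P1 = pair_term a b s" "P2 = pair_term c d s"
    "P3 = pair_term z1 0 s" "P4 = pair_term z2 0 s" "P5 = pair_term z3 0 s"
  have lin: "poly [:e, 1:] s = s + e" for e by simp
  have expand: "poly (witness_poly a b c d y z1 z2 z3) s
      = (s + (a + b + c + d + 4 * y + z1 + z2 + z3)) * X1 * X2 * X3 * X4 * X5
        - (a - b)\<^sup>2 * (X2 * X3 * X4 * X5) - (c - d)\<^sup>2 * (X1 * X3 * X4 * X5)
        - z1\<^sup>2 * (X1 * X2 * X4 * X5) - z2\<^sup>2 * (X1 * X2 * X3 * X5) - z3\<^sup>2 * (X1 * X2 * X3 * X4)"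
    unfolding witness_poly_def X_defs
    by (simp only: poly_diff poly_mult poly_smult lin)
  have sum_eq: "a + b + c + d + 4 * y + z1 + z2 + z3
      = (X1 - s) + (X2 - s) + 4 * y + (X3 - s) + (X4 - s) + (X5 - s)"
    by (simp add: X_defs)
  have single: "z\<^sup>2 = (z - pair_term z 0 s) * (s + z)" if "s + z \<noteq> 0" for z
    using pair_term_eq[of s z 0] that by simp
  have squares: "(a - b)\<^sup>2 = (X1 - s - P1) * X1" "(c - d)\<^sup>2 = (X2 - s - P2) * X2"
      "z1\<^sup>2 = (X3 - s - P3) * X3" "z2\<^sup>2 = (X4 - s - P4) * X4" "z3\<^sup>2 = (X5 - s - P5) * X5"
    using pair_term_eq[OF assms(1)] pair_term_eq[OF assms(2)] single[OF assms(3)] single[OF assms(4)]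
      single[OF assms(5)]
    by (simp_all add: X_defs P_defs add.assoc)
  have "poly (witness_poly a b c d y z1 z2 z3) s = X1 * X2 * X3 * X4 * X5 * (s + 4 * y + P1 + P2 + P3 + P4 + P5)"
    unfolding expand sum_eq squares by (simp add: algebra_simps)
  then show ?thesis
    by (simp add: X_defs P_defs add.assoc)
qed

lemma witness_poly_no_roots_upper:
  assumes "Im a > 0" "Im b > 0" "Im c > 0" "Im d > 0" "Im y > 0" "Im z1 > 0" "Im z2 > 0" "Im z3 > 0"
  shows "no_roots_upper (witness_poly a b c d y z1 z2 z3)"
proof (intro allI impI)
  fix s :: complex assume "Im s \<ge> 0"
  have factors: "s + a + b \<noteq> 0" "s + c + d \<noteq> 0" "s + z1 \<noteq> 0" "s + z2 \<noteq> 0" "s + z3 \<noteq> 0"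
    using assms \<open>Im s \<ge> 0\<close> by (auto dest!: arg_cong[where f = Im])
  let ?h = "s + 4 * y + pair_term a b s + pair_term c d s + pair_term z1 0 s + pair_term z2 0 s
      + pair_term z3 0 s"
  have "Im ?h > 0"
    using Im_pair_term_nonneg[of a b s] Im_pair_term_nonneg[of c d s] Im_pair_term_nonneg[of z1 0 s]
      Im_pair_term_nonneg[of z2 0 s] Im_pair_term_nonneg[of z3 0 s] assms \<open>Im s \<ge> 0\<close> factors
    by simp
  then have "?h \<noteq> 0"
    by (metis less_irrefl zero_complex.sel(2))
  then show "poly (witness_poly a b c d y z1 z2 z3) s \<noteq> 0"
    using factors by (simp add: poly_witness_poly)
qed

lemma coeff_witness_poly:
  "coeff (witness_poly a b c d y z1 z2 z3) 6 = 1"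
  "coeff (witness_poly a b c d y z1 z2 z3) 3 = 4 * f_minor a b c d y z1 z2 z3"
  by (simp_all add: witness_poly_def f_minor_def numeral_eq_Suc power2_eq_square algebra_simps)

lemma f_minor_nonzero_upper:
  assumes "Im a > 0" "Im b > 0" "Im c > 0" "Im d > 0" "Im y > 0" "Im z1 > 0" "Im z2 > 0" "Im z3 > 0"
  shows "f_minor a b c d y z1 z2 z3 \<noteq> 0"
proof -
  have "3 \<le> degree (witness_poly a b c d y z1 z2 z3)"
    using le_degree[of "witness_poly a b c d y z1 z2 z3" 6] coeff_witness_poly(1) by simp
  then have "coeff (witness_poly a b c d y z1 z2 z3) 3 \<noteq> 0"
    using no_roots_upper_coeff_nonzero witness_poly_no_roots_upper[OF assms] by blast
  then show ?thesis by (simp add: coeff_witness_poly(2))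
qed

lemma f_minor_uminus:
  "f_minor (- a) (- b) (- c) (- d) (- y) (- z1) (- z2) (- z3) = - f_minor a b c d y z1 z2 z3"
  using elem_sym_scale[of "- 1" "[a, b, c, d, y, z1, z2, z3]" 3] by (simp add: f_minor_def)

lemma stableI_upper_half_plane:
  assumes nonzero: "\<And>x. (\<forall>i\<in>E. Im (x i) > 0) \<Longrightarrow> f x \<noteq> 0"
    and root_uminus: "\<And>x. f x = 0 \<Longrightarrow> f (\<lambda>i. - x i) = 0"
  shows "stable E f"
  unfolding stable_def
proof (intro allI impI)
  fix v w :: "nat \<Rightarrow> real" and t :: complex
  assume v: "\<forall>i\<in>E. v i > 0"
  define x where "x = (\<lambda>i. t * complex_of_real (v i) + complex_of_real (w i))"
  assume "f (\<lambda>i. t * complex_of_real (v i) + complex_of_real (w i)) = 0"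
  then have root: "f x = 0" by (simp add: x_def)
  have Im_x: "Im (x i) = Im t * v i" for i by (simp add: x_def)
  have "\<not> Im t > 0"
    using nonzero[of x] root v by (auto simp: Im_x)
  moreover have "\<not> Im t < 0"
    using nonzero[of "\<lambda>i. - x i"] root_uminus[OF root] v by (auto simp: Im_x mult_neg_pos)
  ultimately show "t \<in> \<real>" by (simp add: complex_is_Real_iff)
qed

theorem lemma4p2:
  shows "half_plane_property ({1..10} - {5, 7})
           (deletion_bases (contraction_bases V10_bases 5) 7)"
  unfolding half_plane_property_def
proof (rule stableI_upper_half_plane)
  fix x :: "nat \<Rightarrow> complex"
  assume "\<forall>i\<in>{1..10} - {5, 7}. Im (x i) > 0"
  then show "basis_gen_poly (deletion_bases (contraction_bases V10_bases 5) 7) x \<noteq> 0"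
    unfolding basis_gen_poly_V10_minor by (intro f_minor_nonzero_upper) simp_all
next
  fix x :: "nat \<Rightarrow> complex"
  assume "basis_gen_poly (deletion_bases (contraction_bases V10_bases 5) 7) x = 0"
  then show "basis_gen_poly (deletion_bases (contraction_bases V10_bases 5) 7) (\<lambda>i. - x i) = 0"
    unfolding basis_gen_poly_V10_minor f_minor_uminus by simp
qed

end
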